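(* Let $G_1$ and $G_2$ be two vertex-disjoint 2-edge-colored graphs with Hamiltonian alternating cycles $C_1=x_0x_1\cdots x_{2n-1}x_0$ and $C_2=y_0y_1\cdots y_{2m-1}y_0$, respectively, and let $G\in G_1\oplus G_2$. Suppose there is no good pair in $G$ (between $C_1$ and $C_2$), and that for each $i\in\{1,2\}$ there is a vertex of $C_i$ which is non-singular with respect to $C_{3-i}$. Then $G$ is vertex alternating-pancyclic.
   Context: All graphs are simple, with edges colored red or blue. An alternating cycle is a cycle in which consecutive edges have different colors; a Hamiltonian alternating cycle of a graph is an alternating cycle through all its vertices. A 2-edge-colored graph of order $2N$ is vertex alternating-pancyclic if for every vertex $v$ and every $k\in\{2,\dots,N\}$ it contains an alternating cycle of length $2k$ through $v$. For vertex-disjoint 2-edge-colored graphs $G_1,G_2$, the colored generalized sum $G_1\oplus G_2$ is the set of 2-edge-colored graphs $G$ with $V(G)=V(G_1)\cup V(G_2)$, $G\langle V(G_i)\rangle=G_i$ with the same coloring, and exactly one edge (of arbitrary fixed color) between each $u\in V(G_1)$ and $w\in V(G_2)$; these latter edges are the exterior edges. For $v$ on an alternating cycle $C$, $v^r$ (resp. $v^b$) is the neighbor of $v$ on $C$ with $vv^r$ red (resp. $vv^b$ blue). For an exterior edge $vw$ with $v\in V(C_1)$, $w\in V(C_2)$: if $vw$ is red, $vw,v^rw^r$ is a good pair if $v^rw^r$ is red; if $vw$ is blue, $vw,v^bw^b$ is a good pair if $v^bw^b$ is blue. A vertex $v\in V(C_i)$ is singular with respect to $C_{3-i}$ if all edges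 between $v$ and $V(C_{3-i})$ have the same color, and non-singular otherwise. *)

theory Defs
  imports Main
begin

datatype color = Red | Blue

text \<open>A 2-edge-coloured simple graph: vertex set, edge set (2-element subsets),
  and a colouring of the edges (the value of col outside the edges is irrelevant).\<close>
record 'a cgraph =
  verts :: "'a set"
  edges :: "'a set set"
  col :: "'a set \<Rightarrow> color"

definition cgraph :: "'a cgraph \<Rightarrow> bool" where
  "cgraph G \<longleftrightarrow> finite (verts G) \<and>
     (\<forall>e\<in>edges G. \<exists>u v. u \<noteq> v \<and> u \<in> verts G \<and> v \<in> verts G \<and> e = {u, v})"

definition cyc_edge :: "'a list \<Rightarrow> nat \<Rightarrow> 'a set" where
  "cyc_edge vs i = {vs ! i, vs ! ((i + 1) mod length vs)}"

definition alt_cycle :: "'a cgraph \<Rightarrow> 'a list \<Rightarrow> bool" where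
  "alt_cycle G vs \<longleftrightarrow> length vs \<ge> 3 \<and> distinct vs \<and> set vs \<subseteq> verts G \<and>
     (\<forall>i < length vs. cyc_edge vs i \<in> edges G) \<and>
     (\<forall>i < length vs. col G (cyc_edge vs i) \<noteq> col G (cyc_edge vs ((i + 1) mod length vs)))"

definition ham_alt_cycle :: "'a cgraph \<Rightarrow> 'a list \<Rightarrow> bool" where
  "ham_alt_cycle G vs \<longleftrightarrow> alt_cycle G vs \<and> set vs = verts G"

definition vertex_alt_pancyclic :: "'a cgraph \<Rightarrow> bool" where
  "vertex_alt_pancyclic G \<longleftrightarrow> (\<exists>N. card (verts G) = 2 * N \<and>
     (\<forall>v\<in>verts G. \<forall>k. 2 \<le> k \<and> k \<le> N \<longrightarrow>
        (\<exists>vs. alt_cycle G vs \<and> length vs = 2 * k \<and> v \<in> set vs)))"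

definition in_gsum :: "'a cgraph \<Rightarrow> 'a cgraph \<Rightarrow> 'a cgraph \<Rightarrow> bool" where
  "in_gsum G G1 G2 \<longleftrightarrow> cgraph G \<and> verts G1 \<inter> verts G2 = {} \<and>
     verts G = verts G1 \<union> verts G2 \<and>
     {e \<in> edges G. e \<subseteq> verts G1} = edges G1 \<and>
     {e \<in> edges G. e \<subseteq> verts G2} = edges G2 \<and>
     (\<forall>e\<in>edges G1. col G e = col G1 e) \<and>
     (\<forall>e\<in>edges G2. col G e = col G2 e) \<and>
     (\<forall>u\<in>verts G1. \<forall>w\<in>verts G2. {u, w} \<in> edges G)"

definition cyc_nbr :: "'a cgraph \<Rightarrow> 'a list \<Rightarrow> 'a \<Rightarrow> color \<Rightarrow> 'a \<Rightarrow> bool" where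
  "cyc_nbr G vs v c u \<longleftrightarrow> (\<exists>i < length vs. vs ! i = v \<and>
     (u = vs ! ((i + 1) mod length vs) \<or> u = vs ! ((i + length vs - 1) mod length vs)) \<and>
     col G {v, u} = c)"

definition has_good_pair :: "'a cgraph \<Rightarrow> 'a list \<Rightarrow> 'a list \<Rightarrow> bool" where
  "has_good_pair G xs ys \<longleftrightarrow> (\<exists>v\<in>set xs. \<exists>w\<in>set ys. \<exists>c v' w'.
     col G {v, w} = c \<and> cyc_nbr G xs v c v' \<and> cyc_nbr G ys w c w' \<and>
     {v', w'} \<in> edges G \<and> col G {v', w'} = c)"

definition non_singular :: "'a cgraph \<Rightarrow> 'a \<Rightarrow> 'a list \<Rightarrow> bool" where
  "non_singular G v ys \<longleftrightarrow>
     (\<exists>w1\<in>set ys. \<exists>w2\<in>set ys. col G {v, w1} \<noteq> col G {v, w2})"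

end

theory Submission
  imports Defs
begin

text \<open>
  Parametrise \<open>C\<^sub>1\<close> and \<open>C\<^sub>2\<close> by the integers, as \<open>X\<close> and \<open>Y\<close>, so that the edges
  \<open>X i X (i+1)\<close> and \<open>Y j Y (j+1)\<close> are red for even and blue for odd indices. Call the exterior
  edge \<open>X i Y j\<close> X-coloured if it has the colour of \<open>X i X (i+1)\<close>. When \<open>i + j\<close> is odd, the
  neighbours of \<open>X i\<close> and \<open>Y j\<close> in this colour are \<open>X (i+1)\<close> and \<open>Y (j-1)\<close>, so the absence of
  good pairs propagates X-colouredness from \<open>(i, j)\<close> to \<open>(i+1, j-1)\<close>. By periodicity it is then
  constant along each antidiagonal \<open>i + j = s\<close>, with a value \<open>antidiag s\<close> that is periodic
  modulo \<open>2n\<close> and \<open>2m\<close>.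

  If \<open>antidiag\<close> is not constant on the odd integers, it switches from true to false somewhere. An arc of
  \<open>C\<^sub>1\<close> and an arc of \<open>C\<^sub>2\<close> glued at such a switch form an alternating cycle; suitable arc
  lengths give cycles of every length \<open>4, \<dots>, 2(n+m) - 2\<close> through any vertex, and four arcs give a
  Hamiltonian one. Reversing the parametrisation of \<open>C\<^sub>2\<close> turns the even antidiagonals into odd
  ones, so the same applies there. If \<open>antidiag\<close> is constant in both cases, whether \<open>X i Y j\<close> is
  X-coloured depends only on the parity of \<open>i + j\<close>, and then all vertices of one of the cycles
  are singular.
\<close>

section \<open>Parity colourings and periodic predicates\<close>

definition parity_color :: "int \<Rightarrow> color" where
  "parity_color i = (if even i then Red else Blue)"

lemma parity_color_neq_iff: "parity_color i \<noteq> parity_color j \<longleftrightarrow> odd (i + j)"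
  by (auto simp: parity_color_def)

lemma parity_color_add_even: "even d \<Longrightarrow> parity_color (i + d) = parity_color i"
  by (simp add: parity_color_def)

lemma color_eq_parity_colorI: "c \<noteq> parity_color i \<Longrightarrow> odd (i + j) \<Longrightarrow> c = parity_color j"
  by (cases c) (auto simp: parity_color_def)

lemma alternating_parity_color:
  fixes c :: "int \<Rightarrow> color"
  assumes alternating: "\<And>i. c (i + 1) \<noteq> c i"
  obtains d where "\<And>i. c (i + d) = parity_color i"
proof -
  define d :: int where "d = (if c 0 = Red then 0 else 1)"
  have c: "c i = parity_color (i + d)" for i
  proof (induction i rule: int_induct[where k = 0])
    case base
    then show ?case by (cases "c 0") (simp_all add: d_def parity_color_def)
  next
    case (step1 i)
    then have "c (i + 1) \<noteq> parity_color (i + d)" using alternating[of i] by simp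
    then show ?case by (rule color_eq_parity_colorI) simp
  next
    case (step2 i)
    then have "c (i - 1) \<noteq> parity_color (i + d)" using alternating[of "i - 1"] by simp
    then show ?case by (rule color_eq_parity_colorI) simp
  qed
  show thesis
  proof (rule that)
    fix i
    have "c (i + d) = parity_color (i + 2 * d)" using c[of "i + d"] by (simp add: algebra_simps)
    then show "c (i + d) = parity_color i" using parity_color_add_even[of "2 * d" i] by simp
  qed
qed

lemma mod_add_left_cancel_iff: "((a::int) + i) mod L = (a + j) mod L \<longleftrightarrow> i mod L = j mod L"
proof
  assume "(a + i) mod L = (a + j) mod L"
  then have "(a + i - a) mod L = (a + j - a) mod L" by (rule mod_diff_cong[OF _ refl])
  then show "i mod L = j mod L" by simp
qed (rule mod_add_cong[OF refl])

lemma mod_diff_left_cancel_iff: "((a::int) - i) mod L = (a - j) mod L \<longleftrightarrow> i mod L = j mod L"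
proof
  assume "(a - i) mod L = (a - j) mod L"
  then have "(a - (a - i)) mod L = (a - (a - j)) mod L" by (rule mod_diff_cong[OF refl])
  then show "i mod L = j mod L" by simp
qed (rule mod_diff_cong[OF refl])

lemma nat_mod_succ:
  fixes L :: nat
  assumes "L > 0"
  shows "nat ((i + 1) mod int L) = (nat (i mod int L) + 1) mod L"
proof -
  define k where "k = nat (i mod int L)"
  have "int k = i mod int L" using assms by (simp add: k_def)
  then have "(i + 1) mod int L = (int k + 1) mod int L" by (simp add: mod_add_left_eq)
  also have "\<dots> = int ((k + 1) mod L)" by (simp add: zmod_int add.commute)
  finally show ?thesis by (simp add: k_def)
qed

lemma periodic_step_const:
  fixes P :: "int \<Rightarrow> bool"
  assumes step: "\<And>t. P t \<Longrightarrow> P (t + 1)" and period: "\<And>t. P (t + p) = P t" and "p > 0"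
  shows "P t = P 0"
proof -
  have forward: "P (t + int k)" if "P t" for t k
  proof (induction k)
    case (Suc k)
    then show ?case using step[of "t + int k"] by (simp add: add_ac)
  qed (use that in simp)
  have "P t" if "P (t + 1)" for t
    using forward[OF that, of "nat (p - 1)"] period[of t] \<open>p > 0\<close> by (simp add: algebra_simps)
  then have shift: "P (t + 1) = P t" for t using step by blast
  show ?thesis
  proof (induction t rule: int_induct[where k = 0])
    case (step2 i)
    then show ?case using shift[of "i - 1"] by simp
  qed (simp_all add: shift)
qed

lemma periodic_switch:
  fixes P :: "int \<Rightarrow> bool"
  assumes "\<And>t. P (t + p) = P t" and "p > 0" and "P a" and "\<not> P b"
  obtains t where "P t" and "\<not> P (t + 1)"
proof -
  have "\<exists>t. P t \<and> \<not> P (t + 1)"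
  proof (rule ccontr)
    assume "\<nexists>t. P t \<and> \<not> P (t + 1)"
    then have "P a = P 0" "P b = P 0" using periodic_step_const[of P p] assms(1,2) by blast+
    then show False using assms(3,4) by simp
  qed
  then show thesis using that by blast
qed

section \<open>Alternating closed walks\<close>

definition walk_colors :: "'a cgraph \<Rightarrow> 'a list \<Rightarrow> color list" where
  "walk_colors G vs = map (\<lambda>(u, v). col G {u, v}) (zip vs (tl vs))"

lemma walk_colors_singleton [simp]: "walk_colors G [x] = []"
  by (simp add: walk_colors_def)

lemma walk_colors_append:
  "us \<noteq> [] \<Longrightarrow> vs \<noteq> [] \<Longrightarrow>
    walk_colors G (us @ vs) = walk_colors G us @ col G {last us, hd vs} # walk_colors G vs"
proof (induction us rule: list_nonempty_induct)
  case (single x) then show ?case by (cases vs) (auto simp: walk_colors_def)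
next
  case (cons x xs) then show ?case by (cases xs) (auto simp: walk_colors_def)
qed

lemma length_walk_colors [simp]: "length (walk_colors G vs) = length vs - 1"
  by (simp add: walk_colors_def)

lemma nth_walk_colors: "Suc i < length vs \<Longrightarrow> walk_colors G vs ! i = col G {vs ! i, vs ! Suc i}"
  by (simp add: walk_colors_def nth_tl)

lemma alt_cycleI:
  assumes len: "length vs \<ge> 3" and "distinct vs" and "set vs \<subseteq> verts G"
    and edges: "successively (\<lambda>u v. {u, v} \<in> edges G) (vs @ [hd vs])"
    and alternating: "distinct_adj (walk_colors G (vs @ [hd vs]))"
    and wrap: "hd (walk_colors G (vs @ [hd vs])) \<noteq> last (walk_colors G (vs @ [hd vs]))"
  shows "alt_cycle G vs"
proof -
  let ?L = "length vs" and ?w = "vs @ [hd vs]"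
  let ?cs = "walk_colors G ?w"
  have w: "?w ! i = vs ! (i mod ?L)" if "i \<le> ?L" for i
  proof (cases "i = ?L")
    case True then show ?thesis using len by (cases vs) auto
  qed (use that in \<open>simp add: nth_append\<close>)
  have edge: "cyc_edge vs i = {?w ! i, ?w ! Suc i}" if "i < ?L" for i
    using that w[of i] w[of "Suc i"] by (simp add: cyc_edge_def)
  have color: "?cs ! i = col G (cyc_edge vs i)" if "i < ?L" for i
    using that by (simp add: edge nth_walk_colors)
  have "col G (cyc_edge vs i) \<noteq> col G (cyc_edge vs ((i + 1) mod ?L))" if "i < ?L" for i
  proof (cases "Suc i < ?L")
    case True
    then have "?cs ! i \<noteq> ?cs ! Suc i" using alternating by (simp add: distinct_adj_nth)
    then show ?thesis using color[OF that] color[OF True] True by simp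
  next
    case False
    then have "Suc i = ?L" using that by simp
    then have "i = ?L - 1" "(i + 1) mod ?L = 0" by auto
    moreover have "vs \<noteq> []" using len by auto
    moreover have ne: "?cs \<noteq> []" using len by (auto simp flip: length_0_conv)
    ultimately show ?thesis using wrap color[of 0] color[OF that]
      unfolding hd_conv_nth[OF ne] last_conv_nth[OF ne] by simp
  qed
  moreover have "cyc_edge vs i \<in> edges G" if "i < ?L" for i
    using edges that by (simp add: edge successively_conv_nth)
  ultimately show ?thesis using assms by (simp add: alt_cycle_def)
qed

lemma alt_cycle_supergraph:
  assumes "alt_cycle H zs" and "set zs \<subseteq> verts G"
    and "\<And>e. e \<in> edges H \<Longrightarrow> e \<in> edges G \<and> col G e = col H e"
  shows "alt_cycle G zs"
proof -
  have "cyc_edge zs i \<in> edges H" if "i < length zs" for i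
    using assms(1) that by (simp add: alt_cycle_def)
  moreover have "length zs > 0" using assms(1) by (auto simp: alt_cycle_def)
  then have "(i + 1) mod length zs < length zs" for i by simp
  ultimately show ?thesis using assms unfolding alt_cycle_def by metis
qed

section \<open>Integer parametrisations of alternating cycles\<close>

definition arc :: "(int \<Rightarrow> 'a) \<Rightarrow> int \<Rightarrow> nat \<Rightarrow> 'a list" where
  "arc Z a l = map (\<lambda>t. Z (a + int t)) [0..<Suc l]"

lemma arc_ne [simp]: "arc Z a l \<noteq> []"
  by (simp add: arc_def)

lemma hd_arc [simp]: "hd (arc Z a l) = Z a"
  by (simp add: arc_def hd_map del: upt_Suc)

lemma last_arc [simp]: "last (arc Z a l) = Z (a + int l)"
  by (simp add: arc_def last_map)

lemma length_arc [simp]: "length (arc Z a l) = Suc l"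
  by (simp add: arc_def)

lemma nth_arc: "t \<le> l \<Longrightarrow> arc Z a l ! t = Z (a + int t)"
  by (simp add: arc_def del: upt_Suc)

lemma set_arc: "set (arc Z a l) = (\<lambda>t. Z (a + int t)) ` {0..l}"
  by (auto simp: arc_def atLeastLessThanSuc_atLeastAtMost simp del: upt_Suc)

lemma start_in_arc [simp]: "Z a \<in> set (arc Z a l)"
  using hd_in_set[OF arc_ne] by simp

lemma arc_append: "arc Z a p @ arc Z (a + int p + 1) q = arc Z a (p + q + 1)"
proof (rule nth_equalityI)
  fix i assume "i < length (arc Z a p @ arc Z (a + int p + 1) q)"
  then show "(arc Z a p @ arc Z (a + int p + 1) q) ! i = arc Z a (p + q + 1) ! i"
    by (auto simp: nth_append nth_arc add.assoc)
qed simp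

lemma distinct_arc:
  assumes "\<And>i j. Z i = Z j \<longleftrightarrow> i mod L = j mod L" and "int l < L"
  shows "distinct (arc Z a l)"
proof -
  have "inj_on (\<lambda>t. Z (a + int t)) {0..<Suc l}"
  proof (rule inj_onI)
    fix s t assume s: "s \<in> {0..<Suc l}" and t: "t \<in> {0..<Suc l}"
      and "Z (a + int s) = Z (a + int t)"
    then have "(a + int s) mod L = (a + int t) mod L" using assms(1) by blast
    then have "int s mod L = int t mod L" by (simp only: mod_add_left_cancel_iff)
    moreover have "int s mod L = int s" "int t mod L = int t" using s t assms(2) by auto
    ultimately show "s = t" by simp
  qed
  then show ?thesis by (simp add: arc_def distinct_map del: upt_Suc)
qed

definition parity_colors :: "int \<Rightarrow> nat \<Rightarrow> color list" where
  "parity_colors s l = map (\<lambda>t. parity_color (s + int t)) [0..<Suc l]"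

lemma parity_colors_ne [simp]: "parity_colors s l \<noteq> []"
  by (simp add: parity_colors_def)

lemma hd_parity_colors [simp]: "hd (parity_colors s l) = parity_color s"
  by (simp add: parity_colors_def hd_map del: upt_Suc)

lemma last_parity_colors [simp]: "last (parity_colors s l) = parity_color (s + int l)"
  by (simp add: parity_colors_def last_map)

lemma distinct_adj_parity_colors: "distinct_adj (parity_colors s l)"
  by (auto simp: distinct_adj_conv_nth parity_colors_def parity_color_def simp del: upt_Suc)

definition alt_param :: "'a cgraph \<Rightarrow> (int \<Rightarrow> 'a) \<Rightarrow> int \<Rightarrow> bool" where
  "alt_param G Z L \<longleftrightarrow> L > 0 \<and> (\<forall>i j. Z i = Z j \<longleftrightarrow> i mod L = j mod L) \<and>
     (\<forall>i. {Z i, Z (i + 1)} \<in> edges G \<and> col G {Z i, Z (i + 1)} = parity_color i)"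

lemma alt_paramD:
  assumes "alt_param G Z L"
  shows "L > 0" and "Z i = Z j \<longleftrightarrow> i mod L = j mod L"
    and "{Z i, Z (i + 1)} \<in> edges G" and "col G {Z i, Z (i + 1)} = parity_color i"
  using assms by (simp_all add: alt_param_def)

lemma alt_param_periodic: "alt_param G Z L \<Longrightarrow> Z (i + L * k) = Z i"
  by (simp add: alt_paramD(2))

lemma even_alt_param_period:
  assumes "alt_param G Z L" shows "even L"
proof -
  have "Z L = Z 0" "Z (L + 1) = Z (0 + 1)" using alt_paramD(2)[OF assms] by simp_all
  then have "parity_color L = parity_color 0" using alt_paramD(4)[OF assms] by metis
  then show ?thesis by (simp add: parity_color_def split: if_splits)
qed

lemma alt_param_reflect:
  assumes "alt_param G Z L" shows "alt_param G (\<lambda>i. Z (1 - i)) L"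
  unfolding alt_param_def
proof (intro conjI allI)
  fix i j
  show "Z (1 - i) = Z (1 - j) \<longleftrightarrow> i mod L = j mod L"
    using alt_paramD(2)[OF assms] mod_diff_left_cancel_iff by simp
  have "{Z (- i), Z (- i + 1)} \<in> edges G" "col G {Z (- i), Z (- i + 1)} = parity_color (- i)"
    using alt_paramD(3,4)[OF assms] by blast+
  then show "{Z (1 - i), Z (1 - (i + 1))} \<in> edges G"
    and "col G {Z (1 - i), Z (1 - (i + 1))} = parity_color i"
    by (simp_all add: insert_commute parity_color_def)
qed (use alt_paramD(1)[OF assms] in simp)

lemma set_arc_alt_param:
  assumes Z: "alt_param G Z L" and l: "int l = L - 1"
  shows "set (arc Z a l) = range Z"
proof
  show "range Z \<subseteq> set (arc Z a l)"
  proof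
    fix v assume "v \<in> range Z"
    then obtain i where v: "v = Z i" by blast
    define t where "t = nat ((i - a) mod L)"
    have t: "int t = (i - a) mod L" using alt_paramD(1)[OF Z] by (simp add: t_def)
    then have "Z (a + int t) = Z i"
      using alt_paramD(2)[OF Z] by (simp add: mod_add_right_eq)
    moreover have "t \<le> l" using t l pos_mod_bound[OF alt_paramD(1)[OF Z], of "i - a"] by linarith
    ultimately show "v \<in> set (arc Z a l)" unfolding v set_arc by (metis atLeastAtMost_iff image_eqI le0)
  qed
qed (auto simp: set_arc)

lemma walk_colors_arc_append:
  assumes Z: "\<And>i. col G {Z i, Z (i + 1)} = parity_color i"
    and "rest \<noteq> []" and "col G {Z (s + int l), hd rest} = parity_color (s + int l)"
  shows "walk_colors G (arc Z s l @ rest) = parity_colors s l @ walk_colors G rest"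
proof -
  have "col G {Z (s + int t), Z (s + (1 + int t))} = parity_color (s + int t)" for t
    using Z[of "s + int t"] by (simp add: add_ac)
  then have "walk_colors G (arc Z s l) = map (\<lambda>t. parity_color (s + int t)) [0..<l]"
    by (intro nth_equalityI) (auto simp: nth_walk_colors nth_arc)
  then have "walk_colors G (arc Z s l) @ [parity_color (s + int l)] = parity_colors s l"
    by (simp add: parity_colors_def)
  then show ?thesis using assms(2,3) by (simp add: walk_colors_append)
qed

lemma arc_walk_edges:
  assumes "\<And>i. {Z i, Z (i + 1)} \<in> edges G"
  shows "successively (\<lambda>u v. {u, v} \<in> edges G) (arc Z a l)"
proof -
  have "{Z (a + int t), Z (a + int (Suc t))} \<in> edges G" for t
    using assms[of "a + int t"] by (simp add: add_ac)
  then show ?thesis by (auto simp: successively_conv_nth nth_arc simp del: of_nat_Suc)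
qed

definition cyc_nth :: "'a list \<Rightarrow> int \<Rightarrow> 'a" where
  "cyc_nth zs i = zs ! nat (i mod int (length zs))"

definition cycle_adj :: "'a list \<Rightarrow> 'a \<Rightarrow> 'a \<Rightarrow> bool" where
  "cycle_adj zs v u \<longleftrightarrow> (\<exists>k < length zs. zs ! k = v \<and>
     (u = zs ! ((k + 1) mod length zs) \<or> u = zs ! ((k + length zs - 1) mod length zs)))"

definition traverses :: "'a list \<Rightarrow> (int \<Rightarrow> 'a) \<Rightarrow> bool" where
  "traverses zs Z \<longleftrightarrow> (\<forall>i. cycle_adj zs (Z i) (Z (i + 1)) \<and> cycle_adj zs (Z (i + 1)) (Z i))"

lemma cyc_nbr_iff: "cyc_nbr G zs v c u \<longleftrightarrow> cycle_adj zs v u \<and> col G {v, u} = c"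
  by (auto simp: cyc_nbr_def cycle_adj_def)

lemma cycle_adj_in_set: "cycle_adj zs v u \<Longrightarrow> v \<in> set zs"
  by (auto simp: cycle_adj_def)

lemma traverses_reflect:
  assumes "traverses zs Z" shows "traverses zs (\<lambda>i. Z (1 - i))"
  unfolding traverses_def
proof
  fix i :: int
  have "1 - (i + 1) = - i" "1 - i = - i + 1" by simp_all
  moreover have "cycle_adj zs (Z (- i)) (Z (- i + 1)) \<and> cycle_adj zs (Z (- i + 1)) (Z (- i))"
    using assms unfolding traverses_def by blast
  ultimately show "cycle_adj zs (Z (1 - i)) (Z (1 - (i + 1))) \<and> cycle_adj zs (Z (1 - (i + 1))) (Z (1 - i))"
    by simp
qed

lemma cyc_nth_succ:
  "zs \<noteq> [] \<Longrightarrow> cyc_nth zs (i + 1) = zs ! ((nat (i mod int (length zs)) + 1) mod length zs)"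
  by (simp add: cyc_nth_def nat_mod_succ)

lemma cycle_adj_cyc_nth:
  assumes "zs \<noteq> []"
  shows "cycle_adj zs (cyc_nth zs i) (cyc_nth zs (i + 1))"
    and "cycle_adj zs (cyc_nth zs (i + 1)) (cyc_nth zs i)"
proof -
  let ?L = "length zs"
  define k where "k = nat (i mod int ?L)"
  have k: "k < ?L" using assms by (simp add: k_def nat_less_iff)
  have cur: "cyc_nth zs i = zs ! k" and nxt: "cyc_nth zs (i + 1) = zs ! ((k + 1) mod ?L)"
    using cyc_nth_succ[OF assms] by (simp_all add: cyc_nth_def k_def)
  have "((k + 1) mod ?L + ?L - 1) mod ?L = k"
    using k by (cases "k + 1 = ?L") simp_all
  then show "cycle_adj zs (cyc_nth zs (i + 1)) (cyc_nth zs i)"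
    unfolding cycle_adj_def cur nxt using assms by (intro exI[of _ "(k + 1) mod ?L"]) simp
  show "cycle_adj zs (cyc_nth zs i) (cyc_nth zs (i + 1))"
    unfolding cycle_adj_def cur nxt using k by blast
qed

lemma cyc_nth_eq_iff:
  assumes "distinct zs" and "zs \<noteq> []"
  shows "cyc_nth zs i = cyc_nth zs j \<longleftrightarrow> i mod int (length zs) = j mod int (length zs)"
proof -
  have "cyc_nth zs i = cyc_nth zs j \<longleftrightarrow> nat (i mod int (length zs)) = nat (j mod int (length zs))"
    using assms by (simp add: cyc_nth_def nth_eq_iff_index_eq nat_less_iff)
  also have "\<dots> \<longleftrightarrow> i mod int (length zs) = j mod int (length zs)"
    using assms(2) by (intro eq_nat_nat_iff) simp_all
  finally show ?thesis .
qed

lemma cyc_nth_edge: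
  "zs \<noteq> [] \<Longrightarrow> {cyc_nth zs i, cyc_nth zs (i + 1)} = cyc_edge zs (nat (i mod int (length zs)))"
  using cyc_nth_succ[of zs i] by (simp add: cyc_edge_def cyc_nth_def)

lemma range_cyc_nth_shift:
  assumes "zs \<noteq> []" shows "range (\<lambda>i. cyc_nth zs (i + d)) = set zs"
proof
  show "range (\<lambda>i. cyc_nth zs (i + d)) \<subseteq> set zs"
    using assms by (auto simp: cyc_nth_def nat_less_iff)
  show "set zs \<subseteq> range (\<lambda>i. cyc_nth zs (i + d))"
  proof
    fix v assume "v \<in> set zs"
    then obtain k where "k < length zs" "v = zs ! k" by (auto simp: in_set_conv_nth)
    then have "v = cyc_nth zs ((int k - d) + d)" by (simp add: cyc_nth_def)
    then show "v \<in> range (\<lambda>i. cyc_nth zs (i + d))" by blast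
  qed
qed

lemma traverses_cyc_nth_shift:
  assumes "zs \<noteq> []" shows "traverses zs (\<lambda>i. cyc_nth zs (i + d))"
  unfolding traverses_def
proof
  fix i
  have shift: "i + 1 + d = (i + d) + 1" by simp
  show "cycle_adj zs (cyc_nth zs (i + d)) (cyc_nth zs (i + 1 + d)) \<and>
      cycle_adj zs (cyc_nth zs (i + 1 + d)) (cyc_nth zs (i + d))"
    unfolding shift using cycle_adj_cyc_nth[OF assms] by blast
qed

lemma alt_cycle_param:
  assumes cycle: "alt_cycle G zs"
  obtains Z where "alt_param G Z (int (length zs))" and "range Z = set zs" and "traverses zs Z"
proof -
  let ?L = "int (length zs)" and ?W = "cyc_nth zs"
  have ne: "zs \<noteq> []" using cycle by (auto simp: alt_cycle_def)
  have index: "nat (i mod ?L) < length zs" for i using ne by (simp add: nat_less_iff)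
  have succ: "nat ((i + 1) mod ?L) = (nat (i mod ?L) + 1) mod length zs" for i
    using ne by (simp add: nat_mod_succ)
  have "col G {?W (i + 1), ?W (i + 1 + 1)} \<noteq> col G {?W i, ?W (i + 1)}" for i
    using cycle index[of i] unfolding cyc_nth_edge[OF ne] succ by (auto simp: alt_cycle_def)
  then obtain d where d: "col G {?W (i + d), ?W (i + d + 1)} = parity_color i" for i
    using alternating_parity_color[of "\<lambda>i. col G {?W i, ?W (i + 1)}"] by blast
  have "alt_param G (\<lambda>i. ?W (i + d)) ?L"
    unfolding alt_param_def
  proof (intro conjI allI)
    fix i j
    show "?W (i + d) = ?W (j + d) \<longleftrightarrow> i mod ?L = j mod ?L"
      using cycle ne mod_add_left_cancel_iff[of d i ?L j]
      by (simp add: cyc_nth_eq_iff alt_cycle_def add.commute)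
    have "{?W (i + d), ?W (i + 1 + d)} = cyc_edge zs (nat ((i + d) mod ?L))"
      using cyc_nth_edge[OF ne, of "i + d"] by (simp add: add_ac)
    then show "{?W (i + d), ?W (i + 1 + d)} \<in> edges G" using cycle index by (simp add: alt_cycle_def)
    show "col G {?W (i + d), ?W (i + 1 + d)} = parity_color i" using d[of i] by (simp add: add_ac)
  qed (use ne in simp)
  then show thesis using that range_cyc_nth_shift[OF ne] traverses_cyc_nth_shift[OF ne] by blast
qed

section \<open>Two parametrised cycles joined by all exterior edges\<close>

locale cycle_pair =
  fixes G :: "'a cgraph" and X Y :: "int \<Rightarrow> 'a" and n m :: int
  assumes X: "alt_param G X (2 * n)" and Y: "alt_param G Y (2 * m)"
    and n: "n \<ge> 2" and m: "m \<ge> 2"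
    and disjoint: "X i \<noteq> Y j"
    and exterior: "{X i, Y j} \<in> edges G"
    and verts: "verts G = range X \<union> range Y"
begin

lemma exterior': "{Y j, X i} \<in> edges G"
  using exterior by (simp add: insert_commute)

lemma disjoint': "Y j \<noteq> X i"
  using disjoint by metis

lemma walk_edges_arc_X: "successively (\<lambda>u v. {u, v} \<in> edges G) (arc X a l)"
  by (rule arc_walk_edges) (rule alt_paramD(3)[OF X])

lemma walk_edges_arc_Y: "successively (\<lambda>u v. {u, v} \<in> edges G) (arc Y b l)"
  by (rule arc_walk_edges) (rule alt_paramD(3)[OF Y])

lemmas walk_colors_arc_X_append = walk_colors_arc_append[where Z = X, OF alt_paramD(4)[OF X]]

lemmas walk_colors_arc_Y_append = walk_colors_arc_append[where Z = Y, OF alt_paramD(4)[OF Y]]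

lemma set_arc_X: "set (arc X a (nat (2 * n - 1))) = range X"
  using set_arc_alt_param[OF X] n by simp

lemma set_arc_Y: "set (arc Y b (nat (2 * m - 1))) = range Y"
  using set_arc_alt_param[OF Y] m by simp

lemma card_verts: "int (card (verts G)) = 2 * n + 2 * m"
proof -
  have "card (range X) = nat (2 * n)" "card (range Y) = nat (2 * m)"
    using distinct_card[OF distinct_arc[OF alt_paramD(2)[OF X]], of "nat (2 * n - 1)" 0]
      distinct_card[OF distinct_arc[OF alt_paramD(2)[OF Y]], of "nat (2 * m - 1)" 0]
      set_arc_X set_arc_Y n m by simp_all
  moreover have "range X \<inter> range Y = {}" using disjoint by blast
  moreover have "finite (range X)" "finite (range Y)"
    using set_arc_X set_arc_Y by (metis List.finite_set)+
  ultimately show ?thesis using n m by (simp add: verts card_Un_disjoint)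
qed

lemma alt_cycle_two_arcs:
  assumes l1: "int l1 < 2 * n" and l2: "int l2 < 2 * m" and l12: "2 \<le> l1 + l2"
    and J1: "col G {X (a + int l1), Y b} = parity_color (a + int l1)" "odd (a + int l1 + b)"
    and J2: "col G {Y (b + int l2), X a} = parity_color (b + int l2)" "odd (a + (b + int l2))"
  shows "alt_cycle G (arc X a l1 @ arc Y b l2)"
proof (rule alt_cycleI)
  let ?vs = "arc X a l1 @ arc Y b l2"
  show "length ?vs \<ge> 3" using l12 by simp
  show "distinct ?vs"
    using distinct_arc[OF alt_paramD(2)[OF X] l1] distinct_arc[OF alt_paramD(2)[OF Y] l2] disjoint
    by (auto simp: set_arc)
  show "set ?vs \<subseteq> verts G" using verts by (auto simp: set_arc)
  show "successively (\<lambda>u v. {u, v} \<in> edges G) (?vs @ [hd ?vs])"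
    using walk_edges_arc_X walk_edges_arc_Y exterior exterior' by (simp add: successively_append_iff)
  have "walk_colors G (?vs @ [hd ?vs]) = parity_colors a l1 @ parity_colors b l2"
    using J1(1) J2(1)
    by (simp add: walk_colors_arc_X_append walk_colors_arc_Y_append)
  moreover have "parity_color (a + int l1) \<noteq> parity_color b"
    "parity_color (b + int l2) \<noteq> parity_color a"
    using J1(2) J2(2) by (auto simp: parity_color_neq_iff add_ac)
  ultimately show "distinct_adj (walk_colors G (?vs @ [hd ?vs]))"
    and "hd (walk_colors G (?vs @ [hd ?vs])) \<noteq> last (walk_colors G (?vs @ [hd ?vs]))"
    by (simp_all add: distinct_adj_append_iff distinct_adj_parity_colors)
qed

lemma alt_cycle_four_arcs:
  assumes p: "int p1 + int p2 + 2 = 2 * n" and q: "int q1 + int q2 + 2 = 2 * m"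
    and J1: "col G {X (a + int p1), Y b} = parity_color (a + int p1)"
      "odd (a + int p1 + b)"
    and J2: "col G {Y (b + int q1), X (a + int p1 + 1)} = parity_color (b + int q1)"
      "odd (a + int p1 + 1 + (b + int q1))"
    and J3: "col G {X (a + int p1 + 1 + int p2), Y (b + int q1 + 1)} = parity_color (a + int p1 + 1 + int p2)"
      "odd (a + int p1 + 1 + int p2 + (b + int q1 + 1))"
    and J4: "col G {Y (b + int q1 + 1 + int q2), X a} = parity_color (b + int q1 + 1 + int q2)"
      "odd (a + (b + int q1 + 1 + int q2))"
  shows "alt_cycle G (arc X a p1 @ arc Y b q1 @ arc X (a + int p1 + 1) p2 @ arc Y (b + int q1 + 1) q2)"
proof (rule alt_cycleI)
  let ?vs = "arc X a p1 @ arc Y b q1 @ arc X (a + int p1 + 1) p2 @ arc Y (b + int q1 + 1) q2"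
  show "length ?vs \<ge> 3" by simp
  have "distinct (arc X a p1 @ arc X (a + int p1 + 1) p2)"
    using distinct_arc[OF alt_paramD(2)[OF X], of "p1 + p2 + 1"] p by (simp add: arc_append)
  moreover have "distinct (arc Y b q1 @ arc Y (b + int q1 + 1) q2)"
    using distinct_arc[OF alt_paramD(2)[OF Y], of "q1 + q2 + 1"] q by (simp add: arc_append)
  ultimately show "distinct ?vs" using disjoint disjoint' by (auto simp: set_arc)
  show "set ?vs \<subseteq> verts G" using verts by (auto simp: set_arc)
  show "successively (\<lambda>u v. {u, v} \<in> edges G) (?vs @ [hd ?vs])"
    using walk_edges_arc_X walk_edges_arc_Y exterior exterior' by (simp add: successively_append_iff)
  have "walk_colors G (?vs @ [hd ?vs]) = parity_colors a p1 @ parity_colors b q1 @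
      parity_colors (a + int p1 + 1) p2 @ parity_colors (b + int q1 + 1) q2"
    using J1(1) J2(1) J3(1) J4(1)
    by (simp add: walk_colors_arc_X_append walk_colors_arc_Y_append)
  moreover have "parity_color (a + int p1) \<noteq> parity_color b"
    "parity_color (b + int q1) \<noteq> parity_color (a + int p1 + 1)"
    "parity_color (a + int p1 + 1 + int p2) \<noteq> parity_color (b + int q1 + 1)"
    "parity_color (b + int q1 + 1 + int q2) \<noteq> parity_color a"
    using J1(2) J2(2) J3(2) J4(2) by (auto simp: parity_color_neq_iff add_ac)
  ultimately show "distinct_adj (walk_colors G (?vs @ [hd ?vs]))"
    and "hd (walk_colors G (?vs @ [hd ?vs])) \<noteq> last (walk_colors G (?vs @ [hd ?vs]))"
    by (simp_all add: distinct_adj_append_iff distinct_adj_parity_colors)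
qed

lemma set_four_arcs:
  assumes "int p1 + int p2 + 2 = 2 * n" and "int q1 + int q2 + 2 = 2 * m"
  shows "set (arc X a p1 @ arc Y b q1 @ arc X (a + int p1 + 1) p2 @ arc Y (b + int q1 + 1) q2) = verts G"
proof -
  have "set (arc X a p1 @ arc Y b q1 @ arc X (a + int p1 + 1) p2 @ arc Y (b + int q1 + 1) q2) =
      set (arc X a p1 @ arc X (a + int p1 + 1) p2) \<union> set (arc Y b q1 @ arc Y (b + int q1 + 1) q2)"
    by auto
  also have "\<dots> = set (arc X a (nat (2 * n - 1))) \<union> set (arc Y b (nat (2 * m - 1)))"
  proof -
    have "p1 + p2 + 1 = nat (2 * n - 1)" "q1 + q2 + 1 = nat (2 * m - 1)" using assms by arith+
    then show ?thesis by (simp only: arc_append)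
  qed
  finally show ?thesis by (simp add: set_arc_X set_arc_Y verts)
qed

end

lemma (in cycle_pair) reflect: "cycle_pair G X (\<lambda>j. Y (1 - j)) n m"
proof
  show "alt_param G (\<lambda>j. Y (1 - j)) (2 * m)" by (rule alt_param_reflect[OF Y])
  have "range (\<lambda>j. Y (1 - j)) = range Y"
  proof
    show "range Y \<subseteq> range (\<lambda>j. Y (1 - j))"
    proof
      fix v assume "v \<in> range Y"
      then obtain j where "v = Y (1 - (1 - j))" by auto
      then show "v \<in> range (\<lambda>j. Y (1 - j))" by blast
    qed
  qed auto
  then show "verts G = range X \<union> range (\<lambda>j. Y (1 - j))" using verts by simp
qed (simp_all add: X n m disjoint exterior)

section \<open>Exterior colourings without good pairs\<close>

text \<open>The absence of good pairs in coordinates: for \<open>c = parity_color i\<close> the \<open>c\<close>-neighbour of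
  \<open>X i\<close> is \<open>X (i + 1)\<close> and, as \<open>i + j\<close> is odd, that of \<open>Y j\<close> is \<open>Y (j - 1)\<close>.\<close>

locale good_pair_free = cycle_pair +
  assumes no_good_pair:
    "odd (i + j) \<Longrightarrow> col G {X i, Y j} = parity_color i \<Longrightarrow>
      col G {X (i + 1), Y (j - 1)} \<noteq> parity_color i"
begin

definition X_coloured :: "int \<Rightarrow> int \<Rightarrow> bool" where
  "X_coloured i j \<longleftrightarrow> col G {X i, Y j} = parity_color i"

definition antidiag :: "int \<Rightarrow> bool" where
  "antidiag s = X_coloured s 0"

lemma X_coloured_step: "odd (i + j) \<Longrightarrow> X_coloured i j \<Longrightarrow> X_coloured (i + 1) (j - 1)"
  unfolding X_coloured_def
  by (rule color_eq_parity_colorI[OF no_good_pair]) simp_all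

lemma X_coloured_periodic: "X_coloured (i + 2 * n * a) (j + 2 * m * b) = X_coloured i j"
  using alt_param_periodic[OF X, of i a] alt_param_periodic[OF Y, of j b]
    parity_color_add_even[of "2 * n * a" i]
  by (simp add: X_coloured_def mult.assoc)

lemma X_coloured_antidiag:
  assumes "odd (i + j)" shows "X_coloured i j = antidiag (i + j)"
proof -
  let ?P = "\<lambda>t. X_coloured (i + t) (j - t)"
  have "?P (t + 2 * n * (2 * m)) = ?P t" for t
  proof -
    have "i + (t + 2 * n * (2 * m)) = (i + t) + 2 * n * (2 * m)"
      "j - (t + 2 * n * (2 * m)) = (j - t) + 2 * m * (- (2 * n))" by (simp_all add: algebra_simps)
    then show ?thesis by (simp only: X_coloured_periodic)
  qed
  moreover have "?P (t + 1)" if "?P t" for t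
  proof -
    have "X_coloured (i + t + 1) (j - t - 1)" using X_coloured_step[OF _ that] assms by simp
    then show ?thesis by (simp add: add.assoc diff_diff_eq)
  qed
  moreover have "2 * n * (2 * m) > 0" using n m by simp
  ultimately have "?P j = ?P 0" using periodic_step_const[of ?P "2 * n * (2 * m)" j] by blast
  then show ?thesis by (simp add: antidiag_def)
qed

lemma antidiag_periodic:
  assumes "odd s" shows "antidiag (s + 2 * n * a + 2 * m * b) = antidiag s"
proof -
  have "antidiag (s + 2 * n * a + 2 * m * b) = X_coloured ((s + 2 * m * b) + 2 * n * a) (0 + 2 * m * 0)"
    by (simp add: antidiag_def add_ac)
  also have "\<dots> = antidiag (s + 2 * m * b)"
    unfolding X_coloured_periodic antidiag_def ..
  also have "\<dots> = X_coloured s (2 * m * b)"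
    using X_coloured_antidiag[of s "2 * m * b"] assms by simp
  also have "\<dots> = X_coloured (s + 2 * n * 0) (0 + 2 * m * b)"
    by simp
  also have "\<dots> = antidiag s"
    unfolding X_coloured_periodic antidiag_def ..
  finally show ?thesis .
qed

lemma X_coloured_junction_iff:
  assumes "odd s" and sum: "i + j = s + 2 * n * a + 2 * m * b"
  shows "odd (i + j)" and "col G {X i, Y j} = parity_color i \<longleftrightarrow> antidiag s"
proof -
  show odd: "odd (i + j)" using assms(1) sum by simp
  have "X_coloured i j = antidiag (i + j)" by (rule X_coloured_antidiag[OF odd])
  also have "\<dots> = antidiag s" unfolding sum by (rule antidiag_periodic[OF assms(1)])
  finally show "col G {X i, Y j} = parity_color i \<longleftrightarrow> antidiag s" by (simp add: X_coloured_def)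
qed

lemma X_coloured_junction:
  assumes "odd s" and "antidiag s" and "i + j = s + 2 * n * a + 2 * m * b"
  shows "odd (i + j)" and "col G {X i, Y j} = parity_color i"
  using X_coloured_junction_iff[OF assms(1,3)] assms(2) by blast+

lemma Y_coloured_junction:
  assumes "odd s" and "\<not> antidiag s" and "i + j = s + 2 * n * a + 2 * m * b"
  shows "odd (i + j)" and "col G {Y j, X i} = parity_color j"
proof -
  note junction = X_coloured_junction_iff[OF assms(1,3)]
  show "odd (i + j)" by (rule junction(1))
  have "col G {X i, Y j} \<noteq> parity_color i" using junction(2) assms(2) by blast
  then have "col G {X i, Y j} = parity_color j" using junction(1) by (rule color_eq_parity_colorI)
  then show "col G {Y j, X i} = parity_color j" by (simp add: insert_commute)
qed

end

lemma offset_for_arc_lengths: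
  fixes n m K :: int
  assumes "n \<ge> 2" "m \<ge> 2" "1 \<le> K" "K \<le> n + m - 2"
  obtains \<epsilon> a b where "\<epsilon> = 1 \<or> \<epsilon> = -1"
    and "0 \<le> K - (\<epsilon> + n * a + m * b)" "K - (\<epsilon> + n * a + m * b) < 2 * n"
    and "0 \<le> K + (\<epsilon> + n * a + m * b)" "K + (\<epsilon> + n * a + m * b) < 2 * m"
proof (cases "n \<le> m")
  case True
  show ?thesis
  proof (cases "K \<ge> m - n - 1")
    case True
    then show ?thesis using \<open>n \<le> m\<close> assms that[of "-1" "-1" 1] by auto
  next
    case False
    define d r where "d = (K - 1) div n" and "r = (K - 1) mod n"
    have "K - 1 = n * d + r" "0 \<le> r" "r < n" "r \<le> K - 1"
      using assms zmod_le_nonneg_dividend[of "K - 1" n] unfolding d_def r_def by auto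
    then show ?thesis using False \<open>n \<le> m\<close> assms that[of 1 d 0] by auto
  qed
next
  case False
  show ?thesis
  proof (cases "K \<ge> n - m - 1")
    case True
    then show ?thesis using \<open>\<not> n \<le> m\<close> assms that[of 1 "-1" 1] by auto
  next
    case K: False
    define d r where "d = (K - 1) div m" and "r = (K - 1) mod m"
    have "K - 1 = m * d + r" "0 \<le> r" "r < m" "r \<le> K - 1"
      using assms zmod_le_nonneg_dividend[of "K - 1" m] unfolding d_def r_def by auto
    then show ?thesis using K \<open>\<not> n \<le> m\<close> assms that[of "-1" 0 "-d"] by auto
  qed
qed

locale nonconst_good_pair_free = good_pair_free +
  assumes antidiag_nonconst: "\<exists>s. odd s \<and> antidiag s \<noteq> antidiag 1"
begin

lemma antidiag_switch:
  assumes "\<epsilon> = 1 \<or> \<epsilon> = -1"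
  obtains u where "odd u" and "antidiag u" and "\<not> antidiag (u + 2 * \<epsilon>)"
proof -
  let ?Q = "\<lambda>t. antidiag (2 * t + 1)"
  have period: "?Q (t + n) = ?Q t" for t
    using antidiag_periodic[of "2 * t + 1" 1 0] by (simp add: algebra_simps)
  obtain s where "odd s" "antidiag s \<noteq> antidiag 1" using antidiag_nonconst by blast
  then have "?Q (s div 2) \<noteq> ?Q 0" by simp
  then obtain a b where "?Q a" "\<not> ?Q b" by metis
  show thesis
  proof (cases "\<epsilon> = 1")
    case True
    obtain t where "?Q t" "\<not> ?Q (t + 1)"
      using periodic_switch[of ?Q n a b] period n \<open>?Q a\<close> \<open>\<not> ?Q b\<close> by auto
    then show thesis using that[of "2 * t + 1"] True by (simp add: algebra_simps)
  next
    case False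
    obtain t where "\<not> ?Q t" "?Q (t + 1)"
      using periodic_switch[of "\<lambda>t. \<not> ?Q t" n b a] period n \<open>?Q a\<close> \<open>\<not> ?Q b\<close> by auto
    then show thesis using that[of "2 * t + 3"] False assms by (simp add: algebra_simps)
  qed
qed

text \<open>An arc of \<open>X\<close> of length \<open>K - e\<close> followed by an arc of \<open>Y\<close> of length \<open>K + e\<close>: its two
  junctions lie on the antidiagonals \<open>u\<close> and \<open>u + 2 e\<close>, and only the residue of \<open>e\<close> modulo
  \<open>n\<close> and \<open>m\<close> matters there.\<close>

lemma short_alt_cycle:
  assumes k: "2 \<le> k" "k \<le> n + m - 1" and v: "v \<in> verts G"
  obtains vs where "alt_cycle G vs" and "int (length vs) = 2 * k" and "v \<in> set vs"
proof -
  define K where "K = k - 1"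
  obtain \<epsilon> a b where \<epsilon>: "\<epsilon> = 1 \<or> \<epsilon> = -1"
    and bounds: "0 \<le> K - (\<epsilon> + n * a + m * b)" "K - (\<epsilon> + n * a + m * b) < 2 * n"
      "0 \<le> K + (\<epsilon> + n * a + m * b)" "K + (\<epsilon> + n * a + m * b) < 2 * m"
    using offset_for_arc_lengths[of n m K] n m k unfolding K_def by auto
  define e where "e = \<epsilon> + n * a + m * b"
  obtain u where u: "odd u" "antidiag u" "\<not> antidiag (u + 2 * \<epsilon>)"
    using antidiag_switch[OF \<epsilon>] by blast
  define l1 l2 where "l1 = nat (K - e)" and "l2 = nat (K + e)"
  have l: "int l1 = K - e" "int l2 = K + e" using bounds by (simp_all add: l1_def l2_def e_def)
  have cycle: "alt_cycle G (arc X i l1 @ arc Y (u - int l1 - i) l2)" for i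
  proof (rule alt_cycle_two_arcs)
    show "int l1 < 2 * n" "int l2 < 2 * m" "2 \<le> l1 + l2"
      using l bounds k by (simp_all add: e_def K_def)
    have "i + int l1 + (u - int l1 - i) = u + 2 * n * 0 + 2 * m * 0" by simp
    from X_coloured_junction[OF u(1,2) this]
    show "odd (i + int l1 + (u - int l1 - i))"
      and "col G {X (i + int l1), Y (u - int l1 - i)} = parity_color (i + int l1)" by blast+
    have "i + (u - int l1 - i + int l2) = (u + 2 * \<epsilon>) + 2 * n * a + 2 * m * b"
      using l by (simp add: e_def algebra_simps)
    from Y_coloured_junction[OF _ u(3) this] u(1)
    show "odd (i + (u - int l1 - i + int l2))"
      and "col G {Y (u - int l1 - i + int l2), X i} = parity_color (u - int l1 - i + int l2)" by simp_all
  qed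
  have length: "int (length (arc X i l1 @ arc Y j l2)) = 2 * k" for i j
    using l by (simp add: K_def)
  from v verts consider i where "v = X i" | j where "v = Y j" by blast
  then show thesis
  proof cases
    case (1 i)
    then show thesis using that[OF cycle[of i] length] by simp
  next
    case (2 j)
    then show thesis using that[OF cycle[of "u - int l1 - j"] length] by simp
  qed
qed

lemma antidiag_switches:
  obtains p q c r where "odd p" "antidiag p" "\<not> antidiag (p + 2)"
    and "odd q" "\<not> antidiag q" "antidiag (q + 2)"
    and "q - p - 1 = 2 * m * c + r" "0 \<le> r" "r < 2 * m - 1"
proof -
  obtain p where p: "odd p" "antidiag p" "\<not> antidiag (p + 2)"
    using antidiag_switch[of 1] by auto
  obtain q' where "odd q'" "antidiag q'" "\<not> antidiag (q' - 2)"
    using antidiag_switch[of "-1"] by auto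
  moreover define q where "q = q' - 2"
  ultimately have q: "odd q" "\<not> antidiag q" "antidiag (q + 2)" by simp_all
  define r c where "r = (q - p - 1) mod (2 * m)" and "c = (q - p - 1) div (2 * m)"
  have r: "q - p - 1 = 2 * m * c + r" "0 \<le> r" "r < 2 * m"
    using m by (simp_all add: r_def c_def)
  have "r \<noteq> 2 * m - 1"
  proof
    assume "r = 2 * m - 1"
    then have "q = p + 2 * n * 0 + 2 * m * (c + 1)" using r by (simp add: algebra_simps)
    then show False using antidiag_periodic[OF p(1), of 0 "c + 1"] p q by simp
  qed
  then show thesis using that[OF p q r(1,2)] r(3) by simp
qed

text \<open>Two arcs of lengths \<open>2n - 1\<close> and \<open>2m - 1\<close> would need \<open>antidiag\<close> to differ at \<open>s\<close> and
  \<open>s + 2(m - n)\<close>, which periodicity forbids; four arcs with junctions at a switch \<open>p\<close> and at a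
  switch back \<open>q\<close> do close up.\<close>

lemma ham_alt_cycle:
  obtains vs where "alt_cycle G vs" and "int (length vs) = 2 * n + 2 * m" and "set vs = verts G"
proof -
  obtain p q c r where p: "odd p" "antidiag p" "\<not> antidiag (p + 2)"
    and q: "odd q" "\<not> antidiag q" "antidiag (q + 2)"
    and r: "q - p - 1 = 2 * m * c + r" "0 \<le> r" "r < 2 * m - 1"
    by (rule antidiag_switches)
  define p1 q1 q2 where "p1 = nat (2 * n - 3)" and "q1 = nat r" and "q2 = nat (2 * m - 2 - r)"
  have lengths: "int p1 + int 1 + 2 = 2 * n" "int q1 + int q2 + 2 = 2 * m" "int q1 = r"
    using n r by (simp_all add: p1_def q1_def q2_def)
  let ?vs = "arc X 0 p1 @ arc Y (p + 3) q1 @ arc X (0 + int p1 + 1) 1 @ arc Y (p + 3 + int q1 + 1) q2"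
  have "alt_cycle G ?vs"
  proof (rule alt_cycle_four_arcs[OF lengths(1,2)])
    have "0 + int p1 + (p + 3) = p + 2 * n * 1 + 2 * m * 0" using lengths by simp
    from X_coloured_junction[OF p(1,2) this]
    show "odd (0 + int p1 + (p + 3))"
      and "col G {X (0 + int p1), Y (p + 3)} = parity_color (0 + int p1)" by blast+
    have "0 + int p1 + 1 + (p + 3 + int q1) = q + 2 * n * 1 + 2 * m * (- c)"
      using lengths r by (simp add: algebra_simps)
    from Y_coloured_junction[OF q(1,2) this]
    show "odd (0 + int p1 + 1 + (p + 3 + int q1))"
      and "col G {Y (p + 3 + int q1), X (0 + int p1 + 1)} = parity_color (p + 3 + int q1)" by blast+
    have "0 + int p1 + 1 + int 1 + (p + 3 + int q1 + 1) = (q + 2) + 2 * n * 1 + 2 * m * (- c)"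
      using lengths r by (simp add: algebra_simps)
    from X_coloured_junction[OF _ q(3) this] q(1)
    show "odd (0 + int p1 + 1 + int 1 + (p + 3 + int q1 + 1))"
      and "col G {X (0 + int p1 + 1 + int 1), Y (p + 3 + int q1 + 1)} =
        parity_color (0 + int p1 + 1 + int 1)" by simp_all
    have "0 + (p + 3 + int q1 + 1 + int q2) = (p + 2) + 2 * n * 0 + 2 * m * 1"
      using lengths by simp
    from Y_coloured_junction[OF _ p(3) this] p(1)
    show "odd (0 + (p + 3 + int q1 + 1 + int q2))"
      and "col G {Y (p + 3 + int q1 + 1 + int q2), X 0} = parity_color (p + 3 + int q1 + 1 + int q2)"
      by simp_all
  qed
  moreover have "int (length ?vs) = 2 * n + 2 * m" using lengths by simp
  ultimately show thesis using that set_four_arcs[OF lengths(1,2)] by blast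
qed

lemma vertex_alt_pancyclic: "vertex_alt_pancyclic G"
  unfolding vertex_alt_pancyclic_def
proof (intro exI[of _ "nat (n + m)"] conjI ballI allI impI)
  show "card (verts G) = 2 * nat (n + m)" using card_verts n m by linarith
  fix v k assume v: "v \<in> verts G" and k: "2 \<le> k \<and> k \<le> nat (n + m)"
  show "\<exists>vs. alt_cycle G vs \<and> length vs = 2 * k \<and> v \<in> set vs"
  proof (cases "int k \<le> n + m - 1")
    case True
    then obtain vs where "alt_cycle G vs" "int (length vs) = 2 * int k" "v \<in> set vs"
      using short_alt_cycle[of "int k" v] k v by auto
    then show ?thesis by (intro exI[of _ vs]) simp
  next
    case False
    then have "int k = n + m" using k by linarith
    moreover obtain vs where "alt_cycle G vs" "int (length vs) = 2 * n + 2 * m" "set vs = verts G"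
      by (rule ham_alt_cycle)
    ultimately show ?thesis using v by (intro exI[of _ vs]) simp
  qed
qed

end

lemma cycle_pair_of_gsum:
  assumes "ham_alt_cycle G1 xs" and "ham_alt_cycle G2 ys" and "in_gsum G G1 G2"
  obtains X Y n m where "cycle_pair G X Y n m" and "traverses xs X" and "traverses ys Y"
    and "range X = set xs" and "range Y = set ys"
proof -
  have xs: "alt_cycle G1 xs" "set xs = verts G1" and ys: "alt_cycle G2 ys" "set ys = verts G2"
    using assms(1,2) by (simp_all add: ham_alt_cycle_def)
  have disjoint: "verts G1 \<inter> verts G2 = {}" and verts: "verts G = verts G1 \<union> verts G2"
    and edges1: "{e \<in> edges G. e \<subseteq> verts G1} = edges G1" and col1: "\<forall>e\<in>edges G1. col G e = col G1 e"
    and edges2: "{e \<in> edges G. e \<subseteq> verts G2} = edges G2" and col2: "\<forall>e\<in>edges G2. col G e = col G2 e"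
    and exterior: "\<forall>u\<in>verts G1. \<forall>w\<in>verts G2. {u, w} \<in> edges G"
    using assms(3) unfolding in_gsum_def by blast+
  have "alt_cycle G xs"
    by (rule alt_cycle_supergraph[OF xs(1)]) (use xs(2) verts edges1 col1 in auto)
  then obtain X where X: "alt_param G X (int (length xs))" "range X = set xs" "traverses xs X"
    by (rule alt_cycle_param)
  have "length xs \<ge> 3" using \<open>alt_cycle G xs\<close> by (simp add: alt_cycle_def)
  have "alt_cycle G ys"
    by (rule alt_cycle_supergraph[OF ys(1)]) (use ys(2) verts edges2 col2 in auto)
  then obtain Y where Y: "alt_param G Y (int (length ys))" "range Y = set ys" "traverses ys Y"
    by (rule alt_cycle_param)
  have "length ys \<ge> 3" using \<open>alt_cycle G ys\<close> by (simp add: alt_cycle_def)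
  define n m where "n = int (length xs) div 2" and "m = int (length ys) div 2"
  have n: "int (length xs) = 2 * n" and m: "int (length ys) = 2 * m"
    using even_alt_param_period[OF X(1)] even_alt_param_period[OF Y(1)] by (simp_all add: n_def m_def)
  have "cycle_pair G X Y n m"
  proof
    show "alt_param G X (2 * n)" "alt_param G Y (2 * m)" using X(1) Y(1) n m by simp_all
    show "n \<ge> 2" "m \<ge> 2" using n m \<open>length xs \<ge> 3\<close> \<open>length ys \<ge> 3\<close> by simp_all
    fix i j
    have "X i \<in> verts G1" "Y j \<in> verts G2" using X(2) Y(2) xs(2) ys(2) by auto
    then show "X i \<noteq> Y j" and "{X i, Y j} \<in> edges G" using disjoint exterior by auto
  next
    show "verts G = range X \<union> range Y" using verts X(2) Y(2) xs(2) ys(2) by simp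
  qed
  then show thesis using that X(2,3) Y(2,3) by blast
qed

lemma (in cycle_pair) good_pair_freeI:
  assumes "traverses xs X" and "traverses ys Y" and "\<not> has_good_pair G xs ys"
  shows "good_pair_free G X Y n m"
proof
  fix i j assume odd: "odd (i + j)" and Xi: "col G {X i, Y j} = parity_color i"
  have adj: "cycle_adj xs (X i) (X (i + 1))" "cycle_adj ys (Y (j - 1 + 1)) (Y (j - 1))"
    using assms(1,2) unfolding traverses_def by blast+
  then have in_set: "X i \<in> set xs" "Y j \<in> set ys" by (auto dest: cycle_adj_in_set)
  have "cyc_nbr G xs (X i) (parity_color i) (X (i + 1))"
    using adj(1) alt_paramD(4)[OF X] by (simp add: cyc_nbr_iff)
  moreover have "col G {Y j, Y (j - 1)} = parity_color i"
    using alt_paramD(4)[OF Y, of "j - 1"] odd by (simp add: insert_commute parity_color_def)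
  then have "cyc_nbr G ys (Y j) (parity_color i) (Y (j - 1))"
    using adj(2) by (simp add: cyc_nbr_iff)
  ultimately have "has_good_pair G xs ys" if "col G {X (i + 1), Y (j - 1)} = parity_color i"
    unfolding has_good_pair_def using in_set Xi exterior that by blast
  then show "col G {X (i + 1), Y (j - 1)} \<noteq> parity_color i" using assms(3) by blast
qed

lemma parity_pattern_singular:
  fixes f :: "int \<Rightarrow> int \<Rightarrow> color"
  assumes "\<And>i j. f i j = parity_color i \<longleftrightarrow> (if odd (i + j) then \<alpha> else \<beta>)"
  shows "(\<forall>i j j'. f i j = f i j') \<or> (\<forall>i i' j. f i j = f i' j)"
proof -
  have "f i j = (if \<alpha> = \<beta> then parity_color (i + of_bool (\<not> \<alpha>)) else parity_color (j + of_bool \<alpha>))"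
    for i j using assms[of i j] by (cases "f i j") (auto simp: parity_color_def split: if_splits)
  then show ?thesis by (cases "\<alpha> = \<beta>") simp_all
qed

section \<open>The colored generalized sum\<close>

text \<open>\<open>good_pair_free\<close> only controls the exterior edges \<open>X i Y j\<close> with \<open>i + j\<close> odd; the reversed
  parametrisation \<open>Y (1 - j)\<close> of the second cycle covers those with \<open>i + j\<close> even.\<close>

locale no_good_pairs =
  fwd: good_pair_free G X Y n m + bwd: good_pair_free G X "\<lambda>j. Y (1 - j)" n m
  for G :: "'a cgraph" and X Y :: "int \<Rightarrow> 'a" and n m :: int
begin

lemma pancyclic_or_singular:
  "vertex_alt_pancyclic G \<or> (\<forall>i j j'. col G {X i, Y j} = col G {X i, Y j'}) \<or>
    (\<forall>i i' j. col G {X i, Y j} = col G {X i', Y j})"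
proof -
  consider (fwd) "\<exists>s. odd s \<and> fwd.antidiag s \<noteq> fwd.antidiag 1"
    | (bwd) "\<exists>s. odd s \<and> bwd.antidiag s \<noteq> bwd.antidiag 1"
    | (neither) "\<And>s. odd s \<Longrightarrow> fwd.antidiag s = fwd.antidiag 1 \<and> bwd.antidiag s = bwd.antidiag 1"
    by blast
  then show ?thesis
  proof cases
    case fwd
    then interpret nonconst_good_pair_free G X Y n m by unfold_locales
    show ?thesis using vertex_alt_pancyclic by blast
  next
    case bwd
    then interpret nonconst_good_pair_free G X "\<lambda>j. Y (1 - j)" n m by unfold_locales
    show ?thesis using vertex_alt_pancyclic by blast
  next
    case neither
    have "col G {X i, Y j} = parity_color i \<longleftrightarrow> (if odd (i + j) then fwd.antidiag 1 else bwd.antidiag 1)"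
      for i j
    proof (cases "odd (i + j)")
      case True
      then show ?thesis using fwd.X_coloured_antidiag[OF True] neither[OF True]
        by (simp add: fwd.X_coloured_def)
    next
      case False
      then have odd: "odd (i + (1 - j))" by simp
      then show ?thesis using bwd.X_coloured_antidiag[OF odd] neither[OF odd] False
        by (simp add: bwd.X_coloured_def)
    qed
    then show ?thesis using parity_pattern_singular[of "\<lambda>i j. col G {X i, Y j}"] by blast
  qed
qed

end

theorem theorem3p13:
  fixes G1 G2 G :: "'a cgraph" and xs ys :: "'a list"
  assumes "cgraph G1" and "cgraph G2"
    and "ham_alt_cycle G1 xs" and "ham_alt_cycle G2 ys"
    and "in_gsum G G1 G2"
    and "\<not> has_good_pair G xs ys"
    and "\<exists>v\<in>set xs. non_singular G v ys"
    and "\<exists>w\<in>set ys. non_singular G w xs"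
  shows "vertex_alt_pancyclic G"
proof -
  obtain X Y n m where pair: "cycle_pair G X Y n m" and "traverses xs X" "traverses ys Y"
    and ranges: "range X = set xs" "range Y = set ys"
    using cycle_pair_of_gsum[OF assms(3-5)] by blast
  interpret no_good_pairs G X Y n m
  proof (intro no_good_pairs.intro)
    show "good_pair_free G X Y n m"
      by (rule cycle_pair.good_pair_freeI[OF pair]) fact+
    show "good_pair_free G X (\<lambda>j. Y (1 - j)) n m"
      using cycle_pair.good_pair_freeI[OF cycle_pair.reflect[OF pair]
          \<open>traverses xs X\<close> traverses_reflect[OF \<open>traverses ys Y\<close>] assms(6)] .
  qed
  obtain v w w' where "v \<in> range X" "w \<in> range Y" "w' \<in> range Y" "col G {v, w} \<noteq> col G {v, w'}"
    using assms(7) unfolding non_singular_def ranges by blast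
  then have "\<exists>i j j'. col G {X i, Y j} \<noteq> col G {X i, Y j'}" by blast
  moreover obtain w v v' where "w \<in> range Y" "v \<in> range X" "v' \<in> range X" "col G {w, v} \<noteq> col G {w, v'}"
    using assms(8) unfolding non_singular_def ranges by blast
  then have "\<exists>i i' j. col G {X i, Y j} \<noteq> col G {X i', Y j}" by (auto simp: insert_commute)
  ultimately show ?thesis using pancyclic_or_singular by blast
qed
end
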